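(* Let $\delta\in(0,1)$ and let $X_1,X_2,\dots$ be independent random variables with $0\le X_i\le 1$ almost surely. Let $S_n=\sum_{i=1}^n\{X_i-\mathbb{E}(X_i)\}$, $v_n=\sum_{i=1}^n\mathrm{Var}(X_i)$, $b=1$, $u_n=2\ln(\log_2(n)+1)+\ln(4/\delta)$, and $$\epsilon_n=\frac{b u_n+\sqrt{b^2u_n^2+18v_{2n}u_n}}{3n}.$$ Then $$\mathbb{P}\big(\exists n\ge 1:\ S_n/n\ge\epsilon_n\big)\le\delta/2.$$
   Context: $\log_2$ denotes the base-2 logarithm and $\ln$ the natural logarithm. *)

theory Defs
  imports "HOL-Probability.Probability"
begin

definition S_sum :: "'a measure \<Rightarrow> (nat \<Rightarrow> 'a \<Rightarrow> real) \<Rightarrow> nat \<Rightarrow> 'a \<Rightarrow> real" where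
  "S_sum M X n \<omega> = (\<Sum>i=1..n. X i \<omega> - prob_space.expectation M (X i))"

definition v_sum :: "'a measure \<Rightarrow> (nat \<Rightarrow> 'a \<Rightarrow> real) \<Rightarrow> nat \<Rightarrow> real" where
  "v_sum M X n = (\<Sum>i=1..n. prob_space.variance M (X i))"

definition u_seq :: "real \<Rightarrow> nat \<Rightarrow> real" where
  "u_seq \<delta> n = 2 * ln (log 2 (real n) + 1) + ln (4 / \<delta>)"

definition eps_seq :: "'a measure \<Rightarrow> (nat \<Rightarrow> 'a \<Rightarrow> real) \<Rightarrow> real \<Rightarrow> nat \<Rightarrow> real" where
  "eps_seq M X \<delta> n =
     (let b = (1::real); u = u_seq \<delta> n
      in (b * u + sqrt (b\<^sup>2 * u\<^sup>2 + 18 * v_sum M X (2 * n) * u)) / (3 * real n))"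

end

theory Submission
  imports Defs
begin

(*
  Peeling combined with a maximal form of Bernstein's inequality.

  For independent centred Z_i with |Z_i| <= 1, decomposing {max_(m<=N) S_m >= t} according to
  the first passage time m, and using that the increment S_N - S_m is centred and independent
  of Z_1, ..., Z_m, gives P(max_(m<=N) S_m >= t) <= exp(-l t) E exp(l S_N) for every l >= 0.
  Comparing exp with its power series, E exp(l Z_i) <= exp(psi(l) Var Z_i) with
  psi(l) = l^2 / (2 (1 - l/3)), and the choice l = 3t / (3V + t) turns this into
  P(max_(m<=N) S_m >= (u + sqrt(u^2 + 18 V u)) / 3) <= exp(-u), where V = Var S_N.

  Since n eps_n is nondecreasing in n, S_n / n >= eps_n with 2^k <= n < 2^(k+1) forces
  max_(m <= 2^(k+1)) S_m >= 2^k eps_(2^k), an event of probability at most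
  exp(-u_(2^k)) = delta / (4 (k+1)^2). Summing over k gives delta/4 * pi^2/6 <= delta/2.
*)

section \<open>Bernstein's bound on the moment generating function\<close>

definition bernstein_psi :: "real \<Rightarrow> real" where
  "bernstein_psi l = l\<^sup>2 / (2 * (1 - l / 3))"

definition bernstein_threshold :: "real \<Rightarrow> real \<Rightarrow> real" where
  "bernstein_threshold u V = (u + sqrt (u\<^sup>2 + 18 * V * u)) / 3"

lemma two_mult_three_power_le_fact: "2 * 3 ^ n \<le> (fact (n + 2) :: real)"
proof (induction n)
  case (Suc n)
  have "(2::real) * 3 ^ Suc n = 3 * (2 * 3 ^ n)" by simp
  also have "\<dots> \<le> (real (n + 2) + 1) * fact (n + 2)"
    using Suc by (intro mult_mono) auto
  also have "\<dots> = fact (Suc (n + 2))" by (simp only: fact_Suc of_nat_Suc add.commute)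
  finally show ?case by simp
qed simp

lemma exp_le_bernstein:
  fixes y l :: real
  assumes y: "\<bar>y\<bar> \<le> 1" and l: "0 \<le> l" "l < 3"
  shows "exp (l * y) \<le> 1 + l * y + y\<^sup>2 * bernstein_psi l"
proof -
  define a where "a n = inverse (fact (n + 2)) *\<^sub>R (l * y) ^ (n + 2)" for n
  have exp_eq: "exp (l * y) = 1 + l * y + (\<Sum>n. a n)"
    using exp_first_terms[of "l * y" 2] by (simp add: a_def eval_nat_numeral)
  have "summable a"
    using summable_ignore_initial_segment[OF summable_exp_generic[of "l * y"], of 2] unfolding a_def .
  have geometric: "(\<lambda>n. y\<^sup>2 * (l\<^sup>2 / 2) * (l / 3) ^ n) sums (y\<^sup>2 * bernstein_psi l)"
    using sums_mult[OF geometric_sums[of "l / 3"], of "y\<^sup>2 * (l\<^sup>2 / 2)"] l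
    by (simp add: bernstein_psi_def field_simps)
  have a_le: "a n \<le> y\<^sup>2 * (l\<^sup>2 / 2) * (l / 3) ^ n" for n
  proof -
    have "y ^ (n + 2) \<le> \<bar>y\<bar> ^ (n + 2)"
      by (metis abs_ge_self power_abs)
    also have "\<dots> = \<bar>y\<bar> ^ n * y\<^sup>2"
      by (simp add: power_add power2_eq_square)
    also have "\<dots> \<le> y\<^sup>2"
      using y by (simp add: mult_left_le_one_le power_le_one)
    finally have "(l * y) ^ (n + 2) \<le> l ^ (n + 2) * y\<^sup>2"
      unfolding power_mult_distrib using l by (intro mult_left_mono) auto
    then have "a n \<le> l ^ (n + 2) * y\<^sup>2 / fact (n + 2)"
      unfolding a_def by (simp add: divide_inverse mult.commute mult_right_mono)
    also have "\<dots> \<le> l ^ (n + 2) * y\<^sup>2 / (2 * 3 ^ n)"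
      using two_mult_three_power_le_fact[of n] l by (intro divide_left_mono) auto
    also have "\<dots> = y\<^sup>2 * (l\<^sup>2 / 2) * (l / 3) ^ n"
      by (simp add: power_add field_simps power2_eq_square)
    finally show ?thesis .
  qed
  have "(\<Sum>n. a n) \<le> y\<^sup>2 * bernstein_psi l"
    using suminf_le[OF a_le \<open>summable a\<close>] geometric by (auto simp: sums_iff)
  then show ?thesis using exp_eq by simp
qed

lemma bernstein_exponent_exists:
  fixes u V :: real
  assumes "0 \<le> u" "0 \<le> V"
  obtains l where "0 \<le> l" "l < 3" "bernstein_psi l * V - l * bernstein_threshold u V \<le> - u"
proof (cases "V = 0")
  case True
  then show ?thesis
    by (intro that[of "3 / 2"]) (auto simp: bernstein_psi_def bernstein_threshold_def)
next
  case False
  define t where "t = bernstein_threshold u V"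
  have "3 * t - u = sqrt (u\<^sup>2 + 18 * V * u)"
    unfolding t_def bernstein_threshold_def by (simp add: field_simps)
  then have "(3 * t - u)\<^sup>2 = u\<^sup>2 + 18 * V * u"
    using assms by simp
  then have t_root: "3 * t\<^sup>2 = 2 * u * (t + 3 * V)"
    by (simp add: power2_eq_square algebra_simps)
  have "0 \<le> t" using assms by (simp add: t_def bernstein_threshold_def)
  define D where "D = 3 * V + t"
  have D: "0 < D" using assms False \<open>0 \<le> t\<close> by (simp add: D_def)
  \<comment> \<open>The exact minimiser of the exponent; at it the bound holds with equality.\<close>
  define l where "l = 3 * t / D"
  have "1 - l / 3 = 3 * V / D"
    using D by (simp add: l_def D_def field_simps)
  then have "bernstein_psi l * V = l\<^sup>2 * D / 6"
    using D False by (simp add: bernstein_psi_def)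
  then have "bernstein_psi l * V - l * t = l\<^sup>2 * D / 6 - l * t"
    by simp
  also have "\<dots> = - 3 * t\<^sup>2 / (2 * D)"
    using D unfolding l_def by (simp add: field_simps power2_eq_square)
  also have "\<dots> = - u"
    using D t_root by (simp add: D_def field_simps)
  finally have "bernstein_psi l * V - l * bernstein_threshold u V = - u"
    by (simp add: t_def)
  moreover have "0 \<le> l" "l < 3"
    using D \<open>0 \<le> t\<close> assms False by (auto simp: l_def D_def divide_less_eq)
  ultimately show ?thesis
    by (intro that) auto
qed

lemma bernstein_threshold_mono:
  assumes "0 \<le> u" "u \<le> u'" "0 \<le> V" "V \<le> V'"
  shows "bernstein_threshold u V \<le> bernstein_threshold u' V'"
proof -
  have "u\<^sup>2 \<le> u'\<^sup>2" "V * u \<le> V' * u'"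
    using assms by (auto intro!: power_mono mult_mono)
  then have "u\<^sup>2 + 18 * V * u \<le> u'\<^sup>2 + 18 * V' * u'"
    by linarith
  then have "sqrt (u\<^sup>2 + 18 * V * u) \<le> sqrt (u'\<^sup>2 + 18 * V' * u')"
    by (rule real_sqrt_le_mono)
  then show ?thesis
    unfolding bernstein_threshold_def using assms by (intro divide_right_mono add_mono) auto
qed

lemma (in prob_space) nn_integral_exp_le_bernstein:
  fixes Z :: "'a \<Rightarrow> real"
  assumes [measurable]: "Z \<in> borel_measurable M"
    and bound: "AE \<omega> in M. \<bar>Z \<omega>\<bar> \<le> 1" and mean: "expectation Z = 0"
    and l: "0 \<le> l" "l < 3"
  shows "(\<integral>\<^sup>+\<omega>. exp (l * Z \<omega>) \<partial>M) \<le> exp (bernstein_psi l * expectation (\<lambda>\<omega>. (Z \<omega>)\<^sup>2))"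
proof -
  have int_Z: "integrable M Z"
    using bound by (intro integrable_const_bound[where B=1]) auto
  have "AE \<omega> in M. norm ((Z \<omega>)\<^sup>2) \<le> 1"
    using bound by eventually_elim (simp add: abs_square_le_1)
  then have int_Z2: "integrable M (\<lambda>\<omega>. (Z \<omega>)\<^sup>2)"
    by (intro integrable_const_bound[where B=1]) auto
  have "AE \<omega> in M. norm (exp (l * Z \<omega>)) \<le> exp l"
    using bound by eventually_elim (use l in \<open>simp add: mult_left_le\<close>)
  then have int_exp: "integrable M (\<lambda>\<omega>. exp (l * Z \<omega>))"
    by (intro integrable_const_bound[where B="exp l"]) auto
  have "(\<integral>\<^sup>+\<omega>. exp (l * Z \<omega>) \<partial>M) = expectation (\<lambda>\<omega>. exp (l * Z \<omega>))"
    using int_exp by (intro nn_integral_eq_integral) auto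
  also have "expectation (\<lambda>\<omega>. exp (l * Z \<omega>))
      \<le> expectation (\<lambda>\<omega>. 1 + l * Z \<omega> + (Z \<omega>)\<^sup>2 * bernstein_psi l)"
    using bound int_exp int_Z int_Z2
    by (intro integral_mono_AE) (auto elim!: eventually_mono intro: exp_le_bernstein l)
  also have "\<dots> = 1 + bernstein_psi l * expectation (\<lambda>\<omega>. (Z \<omega>)\<^sup>2)"
    using int_Z int_Z2 mean by (simp add: prob_space mult.commute)
  also have "\<dots> \<le> exp (bernstein_psi l * expectation (\<lambda>\<omega>. (Z \<omega>)\<^sup>2))"
    by (rule exp_ge_add_one_self)
  finally show ?thesis
    by (simp add: ennreal_leI)
qed

lemma (in prob_space) nn_integral_exp_sum_le_bernstein:
  fixes Z :: "nat \<Rightarrow> 'a \<Rightarrow> real" and l :: real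
  assumes indep: "indep_vars (\<lambda>_. borel) Z {1..N}"
    and bounded: "\<And>i. i \<in> {1..N} \<Longrightarrow> AE \<omega> in M. \<bar>Z i \<omega>\<bar> \<le> 1"
    and mean: "\<And>i. i \<in> {1..N} \<Longrightarrow> expectation (Z i) = 0"
    and l: "0 \<le> l" "l < 3"
  shows "(\<integral>\<^sup>+\<omega>. exp (l * (\<Sum>i=1..N. Z i \<omega>)) \<partial>M)
    \<le> exp (bernstein_psi l * (\<Sum>i=1..N. expectation (\<lambda>\<omega>. (Z i \<omega>)\<^sup>2)))"
proof -
  have "(\<integral>\<^sup>+\<omega>. exp (l * (\<Sum>i=1..N. Z i \<omega>)) \<partial>M)
      = (\<integral>\<^sup>+\<omega>. (\<Prod>i\<in>{1..N}. ennreal (exp (l * Z i \<omega>))) \<partial>M)"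
    by (simp add: sum_distrib_left exp_sum prod_ennreal)
  also have "\<dots> = (\<Prod>i\<in>{1..N}. \<integral>\<^sup>+\<omega>. exp (l * Z i \<omega>) \<partial>M)"
    by (intro indep_vars_nn_integral indep_vars_compose2[OF indep]) auto
  also have "\<dots> \<le> (\<Prod>i\<in>{1..N}. ennreal (exp (bernstein_psi l * expectation (\<lambda>\<omega>. (Z i \<omega>)\<^sup>2))))"
    using indep bounded mean l
    by (intro prod_mono_ennreal nn_integral_exp_le_bernstein) (auto simp: indep_vars_def)
  also have "\<dots> = exp (bernstein_psi l * (\<Sum>i=1..N. expectation (\<lambda>\<omega>. (Z i \<omega>)\<^sup>2)))"
    by (simp add: prod_ennreal exp_sum sum_distrib_left)
  finally show ?thesis .
qed

section \<open>A maximal inequality via the first passage time\<close>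

lemma (in prob_space) one_le_nn_integral_exp:
  assumes "integrable M Y" "expectation Y = 0"
  shows "1 \<le> (\<integral>\<^sup>+\<omega>. exp (Y \<omega>) \<partial>M)"
proof (cases "integrable M (\<lambda>\<omega>. exp (Y \<omega>))")
  case True
  have "1 = expectation (\<lambda>\<omega>. 1 + Y \<omega>)"
    using assms by (simp add: prob_space)
  also have "\<dots> \<le> expectation (\<lambda>\<omega>. exp (Y \<omega>))"
    using assms True by (intro integral_mono) auto
  also have "ennreal \<dots> = (\<integral>\<^sup>+\<omega>. exp (Y \<omega>) \<partial>M)"
    using True by (intro nn_integral_eq_integral[symmetric]) auto
  finally show ?thesis
    by (simp add: ennreal_leI)
next
  case False
  then have "\<not> (\<integral>\<^sup>+\<omega>. exp (Y \<omega>) \<partial>M) < \<infinity>"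
    using assms(1) by (simp add: integrable_iff_bounded)
  then show ?thesis
    by (simp add: not_less top_unique)
qed

lemma (in prob_space) indep_vars_nn_integral_restrict_mult:
  fixes f g :: "('i \<Rightarrow> 'b) \<Rightarrow> real"
  assumes indep: "indep_vars M' Z I" and AB: "A \<inter> B = {}" "A \<subseteq> I" "B \<subseteq> I"
    and [measurable]: "f \<in> borel_measurable (PiM A M')" "g \<in> borel_measurable (PiM B M')"
    and nonneg: "\<And>x. 0 \<le> f x" "\<And>x. 0 \<le> g x"
  shows "(\<integral>\<^sup>+\<omega>. f (restrict (\<lambda>i. Z i \<omega>) A) * g (restrict (\<lambda>i. Z i \<omega>) B) \<partial>M)
       = (\<integral>\<^sup>+\<omega>. f (restrict (\<lambda>i. Z i \<omega>) A) \<partial>M) * (\<integral>\<^sup>+\<omega>. g (restrict (\<lambda>i. Z i \<omega>) B) \<partial>M)"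
proof -
  define K where "K j = (if j = (0::nat) then A else B)" for j
  define W where "W j = (if j = (0::nat) then (\<lambda>x. ennreal (f x)) else (\<lambda>x. ennreal (g x)))" for j
  have "indep_vars (\<lambda>j. PiM (K j) M') (\<lambda>j \<omega>. restrict (\<lambda>i. Z i \<omega>) (K j)) {0, 1}"
    using AB by (intro indep_vars_restrict[OF indep]) (auto simp: K_def disjoint_family_on_def)
  then have indep_W: "indep_vars (\<lambda>_. borel) (\<lambda>j \<omega>. W j (restrict (\<lambda>i. Z i \<omega>) (K j))) {0, 1}"
    by (rule indep_vars_compose2) (auto simp: W_def K_def)
  have "(\<integral>\<^sup>+\<omega>. (\<Prod>j\<in>{0, 1}. W j (restrict (\<lambda>i. Z i \<omega>) (K j))) \<partial>M)
      = (\<Prod>j\<in>{0, 1}. \<integral>\<^sup>+\<omega>. W j (restrict (\<lambda>i. Z i \<omega>) (K j)) \<partial>M)"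
    by (rule indep_vars_nn_integral[OF _ indep_W]) (simp_all add: W_def)
  then show ?thesis
    by (simp add: W_def K_def ennreal_mult nonneg)
qed

lemma nn_set_integral_disjoint_sum_le:
  fixes f :: "'a \<Rightarrow> ennreal"
  assumes "finite I" "disjoint_family_on A I" "\<And>i. i \<in> I \<Longrightarrow> A i \<in> sets M"
    and "f \<in> borel_measurable M"
  shows "(\<Sum>i\<in>I. \<integral>\<^sup>+x\<in>A i. f x \<partial>M) \<le> (\<integral>\<^sup>+x. f x \<partial>M)"
proof -
  have "(\<Sum>i\<in>I. \<integral>\<^sup>+x\<in>A i. f x \<partial>M) = (\<integral>\<^sup>+x. f x * (\<Sum>i\<in>I. indicator (A i) x) \<partial>M)"
    using assms by (subst nn_integral_sum[symmetric]) (auto simp: sum_distrib_left)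
  also have "\<dots> = (\<integral>\<^sup>+x\<in>(\<Union>i\<in>I. A i). f x \<partial>M)"
    using assms by (simp add: indicator_UN_disjoint)
  also have "\<dots> \<le> (\<integral>\<^sup>+x. f x \<partial>M)"
    by (intro nn_integral_mono) (simp add: mult_left_le indicator_def)
  finally show ?thesis .
qed

definition first_passage :: "real \<Rightarrow> (nat \<Rightarrow> real) \<Rightarrow> nat \<Rightarrow> bool" where
  "first_passage t s m \<longleftrightarrow> t \<le> s m \<and> (\<forall>j\<in>{1..<m}. s j < t)"

lemma first_passage_exists:
  assumes "1 \<le> m" "t \<le> s m"
  obtains k where "k \<in> {1..m}" "first_passage t s k"
proof -
  define k where "k = (LEAST k. 1 \<le> k \<and> t \<le> s k)"
  have k: "1 \<le> k \<and> t \<le> s k"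
    unfolding k_def by (rule LeastI[of _ m]) (use assms in simp)
  moreover have "k \<le> m"
    unfolding k_def using assms by (intro Least_le) simp
  moreover have "s j < t" if "j \<in> {1..<k}" for j
    using not_less_Least[of j "\<lambda>k. 1 \<le> k \<and> t \<le> s k"] that by (auto simp: k_def)
  ultimately show ?thesis
    by (intro that[of k]) (auto simp: first_passage_def)
qed

lemma first_passage_unique:
  assumes "first_passage t s m" "first_passage t s n" "1 \<le> m" "1 \<le> n"
  shows "m = n"
proof -
  have "n \<le> m" if "first_passage t s m" "first_passage t s n" "1 \<le> m" for m n
  proof (rule ccontr)
    assume "\<not> n \<le> m"
    with \<open>1 \<le> m\<close> have "s m < t"
      using \<open>first_passage t s n\<close> by (simp add: first_passage_def)
    with \<open>first_passage t s m\<close> show False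
      by (simp add: first_passage_def)
  qed
  then show ?thesis
    using assms by (simp add: order_antisym)
qed

lemma first_passage_restrict:
  "first_passage t (\<lambda>j. \<Sum>i=1..j. restrict x {1..m} i) m \<longleftrightarrow> first_passage t (\<lambda>j. \<Sum>i=1..j. x i) m"
proof -
  have "(\<Sum>i=1..j. restrict x {1..m} i) = (\<Sum>i=1..j. x i)" if "j \<le> m" for j
    using that by (intro sum.cong) auto
  then show ?thesis
    by (simp add: first_passage_def)
qed

lemma pred_first_passage_PiM [measurable]:
  "Measurable.pred (PiM {1..m} (\<lambda>_. borel)) (\<lambda>x. first_passage t (\<lambda>j. \<Sum>i=1..j. x i :: real) m)"
proof -
  have [measurable]: "(\<lambda>x. \<Sum>i=1..j. x i :: real) \<in> borel_measurable (PiM {1..m} (\<lambda>_. borel))"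
    if "j \<le> m" for j
    using that by (intro borel_measurable_sum measurable_component_singleton) auto
  show ?thesis
    unfolding first_passage_def by measurable
qed

lemma first_passage_event_sets:
  fixes Z :: "nat \<Rightarrow> 'a \<Rightarrow> real"
  assumes "\<And>i. i \<in> {1..N} \<Longrightarrow> Z i \<in> borel_measurable M" and "m \<le> N"
  shows "{\<omega> \<in> space M. first_passage t (\<lambda>j. \<Sum>i=1..j. Z i \<omega>) m} \<in> sets M"
proof -
  have S_sets: "{\<omega> \<in> space M. t \<le> (\<Sum>i=1..j. Z i \<omega>)} \<in> sets M"
      "{\<omega> \<in> space M. (\<Sum>i=1..j. Z i \<omega>) < t} \<in> sets M" if "j \<le> N" for j
  proof -
    have [measurable]: "(\<lambda>\<omega>. \<Sum>i=1..j. Z i \<omega>) \<in> borel_measurable M"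
      using that assms(1) by (intro borel_measurable_sum) auto
    show "{\<omega> \<in> space M. t \<le> (\<Sum>i=1..j. Z i \<omega>)} \<in> sets M"
      "{\<omega> \<in> space M. (\<Sum>i=1..j. Z i \<omega>) < t} \<in> sets M"
      by measurable
  qed
  show ?thesis
    unfolding first_passage_def using assms(2)
    by (intro sets.sets_Collect_conj sets.sets_Collect_finite_All S_sets) auto
qed

lemma (in prob_space) nn_integral_first_passage_split:
  fixes Z :: "nat \<Rightarrow> 'a \<Rightarrow> real" and t l :: real
  assumes indep: "indep_vars (\<lambda>_. borel) Z {1..N}" and m: "m \<in> {1..N}"
  defines "A \<equiv> {\<omega> \<in> space M. first_passage t (\<lambda>j. \<Sum>i=1..j. Z i \<omega>) m}"
  shows "(\<integral>\<^sup>+\<omega>\<in>A. exp (l * ((\<Sum>i=1..N. Z i \<omega>) - t)) \<partial>M)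
    = (\<integral>\<^sup>+\<omega>\<in>A. exp (l * ((\<Sum>i=1..m. Z i \<omega>) - t)) \<partial>M) *
      (\<integral>\<^sup>+\<omega>. exp (l * (\<Sum>i=Suc m..N. Z i \<omega>)) \<partial>M)"
proof -
  \<comment> \<open>the two factors as functions of the independent blocks Z_1..Z_m and Z_(m+1)..Z_N\<close>
  define W0 where "W0 x = exp (l * ((\<Sum>i=1..m. x i) - t)) *
      indicator {x. first_passage t (\<lambda>j. \<Sum>i=1..j. x i) m} x" for x :: "nat \<Rightarrow> real"
  define W1 where "W1 x = exp (l * (\<Sum>i=Suc m..N. x i))" for x :: "nat \<Rightarrow> real"
  have W0_meas: "W0 \<in> borel_measurable (PiM {1..m} (\<lambda>_. borel))"
    unfolding W0_def by measurable
  have W1_meas: "W1 \<in> borel_measurable (PiM {Suc m..N} (\<lambda>_. borel))"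
    unfolding W1_def by measurable
  have W0_eq: "W0 (restrict (\<lambda>i. Z i \<omega>) {1..m}) = exp (l * ((\<Sum>i=1..m. Z i \<omega>) - t)) * indicator A \<omega>"
    if "\<omega> \<in> space M" for \<omega>
    using that first_passage_restrict[of t "\<lambda>i. Z i \<omega>" m] by (simp add: W0_def A_def indicator_def)
  have W1_eq: "W1 (restrict (\<lambda>i. Z i \<omega>) {Suc m..N}) = exp (l * (\<Sum>i=Suc m..N. Z i \<omega>))" for \<omega>
    by (simp add: W1_def)
  have exp_split: "exp (l * ((\<Sum>i=1..N. Z i \<omega>) - t))
      = exp (l * ((\<Sum>i=1..m. Z i \<omega>) - t)) * exp (l * (\<Sum>i=Suc m..N. Z i \<omega>))" for \<omega>
    using sum.ub_add_nat[of 1 m "\<lambda>i. Z i \<omega>" "N - m"] m by (simp add: mult_exp_exp algebra_simps)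
  have "(\<integral>\<^sup>+\<omega>\<in>A. exp (l * ((\<Sum>i=1..N. Z i \<omega>) - t)) \<partial>M)
      = (\<integral>\<^sup>+\<omega>. W0 (restrict (\<lambda>i. Z i \<omega>) {1..m}) * W1 (restrict (\<lambda>i. Z i \<omega>) {Suc m..N}) \<partial>M)"
    unfolding nn_integral_set_ennreal by (intro nn_integral_cong) (simp only: W0_eq W1_eq exp_split mult_ac)
  also have "\<dots> = (\<integral>\<^sup>+\<omega>. W0 (restrict (\<lambda>i. Z i \<omega>) {1..m}) \<partial>M) *
      (\<integral>\<^sup>+\<omega>. W1 (restrict (\<lambda>i. Z i \<omega>) {Suc m..N}) \<partial>M)"
    using m by (intro indep_vars_nn_integral_restrict_mult[OF indep _ _ _ W0_meas W1_meas])
      (auto simp: W0_def W1_def)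
  also have "(\<integral>\<^sup>+\<omega>. W0 (restrict (\<lambda>i. Z i \<omega>) {1..m}) \<partial>M)
      = (\<integral>\<^sup>+\<omega>\<in>A. exp (l * ((\<Sum>i=1..m. Z i \<omega>) - t)) \<partial>M)"
    unfolding nn_integral_set_ennreal by (intro nn_integral_cong) (simp only: W0_eq)
  finally show ?thesis
    by (simp only: W1_eq)
qed

lemma (in prob_space) emeasure_first_passage_le:
  fixes Z :: "nat \<Rightarrow> 'a \<Rightarrow> real" and t l :: real
  assumes indep: "indep_vars (\<lambda>_. borel) Z {1..N}"
    and int: "\<And>i. i \<in> {1..N} \<Longrightarrow> integrable M (Z i)"
    and mean: "\<And>i. i \<in> {1..N} \<Longrightarrow> expectation (Z i) = 0"
    and l: "0 \<le> l" and m: "m \<in> {1..N}"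
  defines "A \<equiv> {\<omega> \<in> space M. first_passage t (\<lambda>j. \<Sum>i=1..j. Z i \<omega>) m}"
  shows "emeasure M A \<le> (\<integral>\<^sup>+\<omega>\<in>A. exp (l * ((\<Sum>i=1..N. Z i \<omega>) - t)) \<partial>M)"
proof -
  have "A \<in> sets M"
    unfolding A_def using indep m by (intro first_passage_event_sets[where N = N]) (auto simp: indep_vars_def)
  then have "emeasure M A = (\<integral>\<^sup>+\<omega>. indicator A \<omega> \<partial>M)"
    by simp
  also have "\<dots> \<le> (\<integral>\<^sup>+\<omega>\<in>A. exp (l * ((\<Sum>i=1..m. Z i \<omega>) - t)) \<partial>M)"
    using l by (intro nn_integral_mono) (auto simp: A_def first_passage_def split: split_indicator)
  also have "\<dots> \<le> (\<integral>\<^sup>+\<omega>\<in>A. exp (l * ((\<Sum>i=1..m. Z i \<omega>) - t)) \<partial>M) *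
      (\<integral>\<^sup>+\<omega>. exp (l * (\<Sum>i=Suc m..N. Z i \<omega>)) \<partial>M)" (is "?a \<le> ?a * ?b")
  proof -
    have "1 \<le> ?b"
      using int mean by (intro one_le_nn_integral_exp) auto
    then have "?a * 1 \<le> ?a * ?b"
      by (rule mult_left_mono) simp
    then show ?thesis
      by simp
  qed
  also have "\<dots> = (\<integral>\<^sup>+\<omega>\<in>A. exp (l * ((\<Sum>i=1..N. Z i \<omega>) - t)) \<partial>M)"
    unfolding A_def using indep m by (rule nn_integral_first_passage_split[symmetric])
  finally show ?thesis .
qed

lemma (in prob_space) emeasure_exists_partial_sum_ge_le:
  fixes Z :: "nat \<Rightarrow> 'a \<Rightarrow> real" and t l :: real
  assumes indep: "indep_vars (\<lambda>_. borel) Z {1..N}"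
    and int: "\<And>i. i \<in> {1..N} \<Longrightarrow> integrable M (Z i)"
    and mean: "\<And>i. i \<in> {1..N} \<Longrightarrow> expectation (Z i) = 0"
    and l: "0 \<le> l"
  shows "emeasure M {\<omega> \<in> space M. \<exists>m\<in>{1..N}. t \<le> (\<Sum>i=1..m. Z i \<omega>)}
    \<le> exp (- l * t) * (\<integral>\<^sup>+\<omega>. exp (l * (\<Sum>i=1..N. Z i \<omega>)) \<partial>M)"
proof -
  define A where "A m = {\<omega> \<in> space M. first_passage t (\<lambda>j. \<Sum>i=1..j. Z i \<omega>) m}" for m
  define F where "F \<omega> = ennreal (exp (l * ((\<Sum>i=1..N. Z i \<omega>) - t)))" for \<omega>
  have Z_meas[measurable]: "Z i \<in> borel_measurable M" if "i \<in> {1..N}" for i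
    using indep that by (auto simp: indep_vars_def)
  have A_sets: "A m \<in> sets M" if "m \<in> {1..N}" for m
    unfolding A_def using that by (intro first_passage_event_sets[where N = N] Z_meas) auto
  have "{\<omega> \<in> space M. \<exists>m\<in>{1..N}. t \<le> (\<Sum>i=1..m. Z i \<omega>)} \<subseteq> (\<Union>m\<in>{1..N}. A m)"
  proof safe
    fix \<omega> m assume "\<omega> \<in> space M" "m \<in> {1..N}" "t \<le> (\<Sum>i=1..m. Z i \<omega>)"
    then obtain k where "k \<in> {1..m}" "first_passage t (\<lambda>j. \<Sum>i=1..j. Z i \<omega>) k"
      using first_passage_exists[of m t "\<lambda>j. \<Sum>i=1..j. Z i \<omega>"] by auto
    then show "\<omega> \<in> (\<Union>m\<in>{1..N}. A m)"
      using \<open>\<omega> \<in> space M\<close> \<open>m \<in> {1..N}\<close> by (auto simp: A_def)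
  qed
  then have "emeasure M {\<omega> \<in> space M. \<exists>m\<in>{1..N}. t \<le> (\<Sum>i=1..m. Z i \<omega>)}
      \<le> emeasure M (\<Union>m\<in>{1..N}. A m)"
    using A_sets by (intro emeasure_mono) auto
  also have "\<dots> \<le> (\<Sum>m\<in>{1..N}. emeasure M (A m))"
    using A_sets by (intro emeasure_subadditive_finite) auto
  also have "\<dots> \<le> (\<Sum>m\<in>{1..N}. \<integral>\<^sup>+\<omega>\<in>A m. F \<omega> \<partial>M)"
    unfolding A_def F_def using indep int mean l
    by (intro sum_mono emeasure_first_passage_le) auto
  also have "\<dots> \<le> (\<integral>\<^sup>+\<omega>. F \<omega> \<partial>M)"
  proof (rule nn_set_integral_disjoint_sum_le)
    show "disjoint_family_on A {1..N}"
      unfolding disjoint_family_on_def A_def using first_passage_unique by fastforce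
  qed (use A_sets in \<open>auto simp: F_def\<close>)
  also have "\<dots> = exp (- l * t) * (\<integral>\<^sup>+\<omega>. exp (l * (\<Sum>i=1..N. Z i \<omega>)) \<partial>M)"
    unfolding F_def
    by (subst nn_integral_cmult[symmetric])
       (auto intro!: nn_integral_cong simp: ennreal_mult'[symmetric] mult_exp_exp algebra_simps)
  finally show ?thesis .
qed

lemma (in prob_space) bernstein_maximal_inequality:
  fixes X :: "nat \<Rightarrow> 'a \<Rightarrow> real" and u :: real
  assumes indep: "indep_vars (\<lambda>_. borel) X {1..N}"
    and bounded: "\<And>i. i \<in> {1..N} \<Longrightarrow> AE \<omega> in M. \<bar>X i \<omega> - expectation (X i)\<bar> \<le> 1"
    and "0 \<le> u"
  shows "emeasure M {\<omega> \<in> space M. \<exists>m\<in>{1..N}.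
      bernstein_threshold u (\<Sum>i=1..N. variance (X i)) \<le> (\<Sum>i=1..m. X i \<omega> - expectation (X i))}
    \<le> exp (- u)"
proof -
  define Z where "Z i = (\<lambda>\<omega>. X i \<omega> - expectation (X i))" for i
  define V where "V = (\<Sum>i=1..N. variance (X i))"
  have "indep_vars (\<lambda>_. borel) (\<lambda>i \<omega>. (\<lambda>x. x - expectation (X i)) (X i \<omega>)) {1..N}"
    by (intro indep_vars_compose2[OF indep]) auto
  then have indep_Z: "indep_vars (\<lambda>_. borel) Z {1..N}"
    by (simp add: Z_def[abs_def])
  have bounded_Z: "AE \<omega> in M. \<bar>Z i \<omega>\<bar> \<le> 1" if "i \<in> {1..N}" for i
    using bounded[OF that] by (simp add: Z_def)
  have int_Z: "integrable M (Z i)" if "i \<in> {1..N}" for i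
    using indep_Z bounded_Z[OF that] that
    by (intro integrable_const_bound[where B=1]) (auto simp: indep_vars_def)
  have mean_Z: "expectation (Z i) = 0" if "i \<in> {1..N}" for i
  proof -
    have "integrable M (\<lambda>\<omega>. Z i \<omega> + expectation (X i))"
      using int_Z[OF that] by simp
    then show ?thesis
      by (simp add: Z_def prob_space)
  qed
  have "0 \<le> V"
    unfolding V_def by (intro sum_nonneg variance_positive)
  then obtain l where l: "0 \<le> l" "l < 3"
    and exponent: "bernstein_psi l * V - l * bernstein_threshold u V \<le> - u"
    using bernstein_exponent_exists[OF \<open>0 \<le> u\<close>] by blast
  have "(\<integral>\<^sup>+\<omega>. exp (l * (\<Sum>i=1..N. Z i \<omega>)) \<partial>M)
      \<le> exp (bernstein_psi l * (\<Sum>i=1..N. expectation (\<lambda>\<omega>. (Z i \<omega>)\<^sup>2)))"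
    using indep_Z bounded_Z mean_Z l by (rule nn_integral_exp_sum_le_bernstein)
  also have "(\<Sum>i=1..N. expectation (\<lambda>\<omega>. (Z i \<omega>)\<^sup>2)) = V"
    by (simp add: V_def Z_def)
  finally have mgf: "(\<integral>\<^sup>+\<omega>. exp (l * (\<Sum>i=1..N. Z i \<omega>)) \<partial>M) \<le> exp (bernstein_psi l * V)" .
  have "emeasure M {\<omega> \<in> space M. \<exists>m\<in>{1..N}. bernstein_threshold u V \<le> (\<Sum>i=1..m. Z i \<omega>)}
      \<le> exp (- l * bernstein_threshold u V) * (\<integral>\<^sup>+\<omega>. exp (l * (\<Sum>i=1..N. Z i \<omega>)) \<partial>M)"
    using indep_Z int_Z mean_Z l(1) by (rule emeasure_exists_partial_sum_ge_le)
  also have "\<dots> \<le> ennreal (exp (- l * bernstein_threshold u V)) * ennreal (exp (bernstein_psi l * V))"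
    using mgf by (rule mult_left_mono) simp
  also have "\<dots> = exp (bernstein_psi l * V - l * bernstein_threshold u V)"
    by (simp add: ennreal_mult[symmetric] mult_exp_exp)
  also have "\<dots> \<le> exp (- u)"
    using exponent by (intro ennreal_leI) simp
  finally show ?thesis
    by (simp add: Z_def V_def)
qed

section \<open>Peeling over dyadic blocks\<close>

lemma (in prob_space) AE_abs_diff_expectation_le:
  fixes f :: "'a \<Rightarrow> real"
  assumes "f \<in> borel_measurable M" and "AE \<omega> in M. a \<le> f \<omega> \<and> f \<omega> \<le> b"
  shows "AE \<omega> in M. \<bar>f \<omega> - expectation f\<bar> \<le> b - a"
proof -
  have "AE \<omega> in M. norm (f \<omega>) \<le> \<bar>a\<bar> + \<bar>b\<bar>"
    using assms(2) by eventually_elim auto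
  then have "integrable M f"
    using assms(1) by (intro integrable_const_bound[where B="\<bar>a\<bar> + \<bar>b\<bar>"])
  then have "a \<le> expectation f" "expectation f \<le> b"
    using assms(2) by (auto intro!: integral_ge_const integral_le_const elim: eventually_mono)
  with assms(2) show ?thesis
    by (auto elim: eventually_mono)
qed

lemma v_sum_nonneg: "0 \<le> v_sum M X n"
  unfolding v_sum_def by (intro sum_nonneg Bochner_Integration.integral_nonneg) simp

lemma v_sum_mono: "m \<le> n \<Longrightarrow> v_sum M X m \<le> v_sum M X n"
  unfolding v_sum_def by (intro sum_mono2 Bochner_Integration.integral_nonneg) auto

lemma u_seq_nonneg: "0 < \<delta> \<Longrightarrow> \<delta> \<le> 4 \<Longrightarrow> 1 \<le> n \<Longrightarrow> 0 \<le> u_seq \<delta> n"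
  unfolding u_seq_def by (intro add_nonneg_nonneg) auto

lemma u_seq_mono:
  assumes "1 \<le> m" "m \<le> n"
  shows "u_seq \<delta> m \<le> u_seq \<delta> n"
proof -
  have "0 \<le> log 2 m" "log 2 m \<le> log 2 n"
    using assms by auto
  then have "ln (log 2 m + 1) \<le> ln (log 2 n + 1)"
    by simp
  then show ?thesis
    by (simp add: u_seq_def)
qed

lemma exp_neg_u_seq:
  assumes "0 < \<delta>" "1 \<le> n"
  shows "exp (- u_seq \<delta> n) = \<delta> / (4 * (log 2 n + 1)\<^sup>2)"
proof -
  define L where "L = log 2 n + 1"
  have "0 < L"
    using assms by (simp add: L_def add_nonneg_pos)
  then have "exp (2 * ln L) = L\<^sup>2"
    using exp_of_nat_mult[of 2 "ln L"] by simp
  then have "exp (u_seq \<delta> n) = L\<^sup>2 * (4 / \<delta>)"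
    using assms by (simp add: u_seq_def L_def exp_add)
  then show ?thesis
    using \<open>0 < L\<close> by (simp add: exp_minus L_def field_simps)
qed

lemma of_nat_mult_eps_seq:
  "1 \<le> n \<Longrightarrow> real n * eps_seq M X \<delta> n = bernstein_threshold (u_seq \<delta> n) (v_sum M X (2 * n))"
  by (simp add: eps_seq_def bernstein_threshold_def Let_def)

lemma of_nat_mult_eps_seq_mono:
  assumes "0 < \<delta>" "\<delta> \<le> 4" "1 \<le> m" "m \<le> n"
  shows "real m * eps_seq M X \<delta> m \<le> real n * eps_seq M X \<delta> n"
  using assms
  by (simp add: of_nat_mult_eps_seq bernstein_threshold_mono u_seq_nonneg u_seq_mono
      v_sum_nonneg v_sum_mono)

definition peeling_event :: "'a measure \<Rightarrow> (nat \<Rightarrow> 'a \<Rightarrow> real) \<Rightarrow> real \<Rightarrow> nat \<Rightarrow> 'a set" where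
  "peeling_event M X \<delta> k = {\<omega> \<in> space M. \<exists>m\<in>{1..2 * 2 ^ k}.
     bernstein_threshold (u_seq \<delta> (2 ^ k)) (v_sum M X (2 * 2 ^ k)) \<le> S_sum M X m \<omega>}"

lemma exceedance_subset_peeling_events:
  assumes "0 < \<delta>" "\<delta> \<le> 4"
  shows "{\<omega> \<in> space M. \<exists>n\<ge>1. eps_seq M X \<delta> n \<le> S_sum M X n \<omega> / real n}
    \<subseteq> (\<Union>k. peeling_event M X \<delta> k)"
proof
  fix \<omega> assume "\<omega> \<in> {\<omega> \<in> space M. \<exists>n\<ge>1. eps_seq M X \<delta> n \<le> S_sum M X n \<omega> / real n}"
  then obtain n where \<omega>: "\<omega> \<in> space M" and n: "1 \<le> n"
    and exceeds: "eps_seq M X \<delta> n \<le> S_sum M X n \<omega> / real n"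
    by auto
  obtain k where k: "2 ^ k \<le> n" "n < 2 ^ (k + 1)"
    using ex_power_ivl1[of 2 n] n by auto
  have "bernstein_threshold (u_seq \<delta> (2 ^ k)) (v_sum M X (2 * 2 ^ k)) = real (2 ^ k) * eps_seq M X \<delta> (2 ^ k)"
    using of_nat_mult_eps_seq[of "2 ^ k" M X \<delta>] by simp
  also have "\<dots> \<le> real n * eps_seq M X \<delta> n"
    using assms k by (intro of_nat_mult_eps_seq_mono) auto
  also have "\<dots> \<le> S_sum M X n \<omega>"
    using n exceeds by (simp add: field_simps)
  finally have "\<omega> \<in> peeling_event M X \<delta> k"
    using \<omega> n k unfolding peeling_event_def by auto
  then show "\<omega> \<in> (\<Union>k. peeling_event M X \<delta> k)"
    by blast
qed

lemma peeling_event_sets: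
  assumes "\<And>i. 1 \<le> i \<Longrightarrow> X i \<in> borel_measurable M"
  shows "peeling_event M X \<delta> k \<in> sets M"
proof -
  have [measurable]: "(\<lambda>\<omega>. S_sum M X m \<omega>) \<in> borel_measurable M" for m
    unfolding S_sum_def using assms by (intro borel_measurable_sum borel_measurable_diff) auto
  show ?thesis
    unfolding peeling_event_def by (intro sets.sets_Collect_finite_Ex finite_atLeastAtMost) measurable
qed

lemma (in prob_space) emeasure_peeling_event_le:
  assumes indep: "indep_vars (\<lambda>_. borel) X {1..}"
    and bounded: "\<And>i. 1 \<le> i \<Longrightarrow> AE \<omega> in M. \<bar>X i \<omega> - expectation (X i)\<bar> \<le> 1"
    and "0 < \<delta>" "\<delta> \<le> 4"
  shows "emeasure M (peeling_event M X \<delta> k) \<le> \<delta> / 4 * (1 / (real k + 1)\<^sup>2)"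
proof -
  have "emeasure M (peeling_event M X \<delta> k) \<le> exp (- u_seq \<delta> (2 ^ k))"
    unfolding peeling_event_def S_sum_def v_sum_def using assms(3,4)
    by (intro bernstein_maximal_inequality indep_vars_subset[OF indep] bounded u_seq_nonneg) auto
  also have "exp (- u_seq \<delta> (2 ^ k)) = \<delta> / 4 * (1 / (real k + 1)\<^sup>2)"
    using assms(3) by (simp add: exp_neg_u_seq)
  finally show ?thesis .
qed

lemma suminf_inverse_squares_le:
  fixes c :: real
  assumes "0 \<le> c"
  shows "(\<Sum>k. ennreal (c * (1 / (real k + 1)\<^sup>2))) \<le> ennreal (2 * c)"
proof -
  have "(\<lambda>k. c * (1 / (real k + 1)\<^sup>2)) sums (c * (pi\<^sup>2 / 6))"
    using sums_mult[OF inverse_squares_sums, of c] by (simp add: add.commute)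
  then have "(\<Sum>k. ennreal (c * (1 / (real k + 1)\<^sup>2))) = c * (pi\<^sup>2 / 6)"
    using assms by (intro suminf_ennreal_eq) auto
  also have "\<dots> \<le> ennreal (2 * c)"
  proof (intro ennreal_leI)
    have "pi * pi \<le> 16 / 5 * (16 / 5)"
      using pi_approx(2) by (intro mult_mono) auto
    then have "c * (pi\<^sup>2 / 6) \<le> c * 2"
      using assms by (intro mult_left_mono) (auto simp: power2_eq_square)
    then show "c * (pi\<^sup>2 / 6) \<le> 2 * c"
      by linarith
  qed
  finally show ?thesis .
qed

theorem lemma5:
  fixes M :: "'a measure" and X :: "nat \<Rightarrow> 'a \<Rightarrow> real" and \<delta> :: real
  assumes "prob_space M"
    and "0 < \<delta>" and "\<delta> < 1"
    and "prob_space.indep_vars M (\<lambda>_. borel) X {1..}"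
    and "\<And>i. i \<ge> 1 \<Longrightarrow> (AE \<omega> in M. 0 \<le> X i \<omega> \<and> X i \<omega> \<le> 1)"
  shows "measure M {\<omega> \<in> space M. \<exists>n\<ge>1. S_sum M X n \<omega> / real n \<ge> eps_seq M X \<delta> n} \<le> \<delta> / 2"
proof -
  interpret prob_space M by fact
  have X_meas: "X i \<in> borel_measurable M" if "1 \<le> i" for i
    using assms(4) that by (auto simp: indep_vars_def)
  have bounded: "AE \<omega> in M. \<bar>X i \<omega> - expectation (X i)\<bar> \<le> 1" if "1 \<le> i" for i
    using AE_abs_diff_expectation_le[OF X_meas assms(5)] that by simp
  have peeling_sets: "peeling_event M X \<delta> k \<in> events" for k
    using X_meas by (rule peeling_event_sets)
  have "emeasure M {\<omega> \<in> space M. \<exists>n\<ge>1. eps_seq M X \<delta> n \<le> S_sum M X n \<omega> / real n}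
      \<le> emeasure M (\<Union>k. peeling_event M X \<delta> k)"
    using exceedance_subset_peeling_events[of \<delta> M X] assms(2,3) peeling_sets
    by (intro emeasure_mono) auto
  also have "\<dots> \<le> (\<Sum>k. emeasure M (peeling_event M X \<delta> k))"
    using peeling_sets by (intro emeasure_subadditive_countably) auto
  also have "\<dots> \<le> (\<Sum>k. ennreal (\<delta> / 4 * (1 / (real k + 1)\<^sup>2)))"
    using assms(2,3) by (intro suminf_le emeasure_peeling_event_le assms(4) bounded) auto
  also have "\<dots> \<le> ennreal (2 * (\<delta> / 4))"
    using assms(2) by (intro suminf_inverse_squares_le) simp
  finally show ?thesis
    using assms(2) by (simp add: emeasure_eq_measure)
qed

end
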